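(* Let $\omega\in\Omega_0$, $N\ge2$, and let $\boldsymbol u=(\boldsymbol u(1),\dots,\boldsymbol u(N))$, $\boldsymbol u(j)=(a(j),b(j))^{\mathsf T}$, be an eigenvector of $\mathcal S_\omega|_{[1,N]}$ with eigenvalue $z$. (i) If $z\neq V_{22,\omega}(j)$ for all $j\in[1,N]$, then $a(1)a(N)\neq0$; if $z=V_{22,\omega}(1)$, then $a(N)\neq0$; if $z=V_{22,\omega}(N)$, then $a(1)\neq0$. Moreover, if $z\neq V_{22,\omega}(j)$ for all $j\in[2,N-1]$, then $z$ is a simple eigenvalue. (ii) If $z=V_{22,\omega}(m)$ for some $m\in[2,N-1]$, then the multiplicity of $z$ does not exceed $2$; if the multiplicity is $2$, then there exists an eigenvector whose component $a(N)$ is nonzero and there exists an eigenvector whose component $a(N)$ is zero.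
   Context: $(\Omega,\mathcal F,\nu,T)$ is ergodic and $f=(f_{ij}):\Omega\to M(2,\mathbb C)$ bounded measurable with self-adjoint values; $V_\omega(n)=f(T^n\omega)$ with entries $V_{ij,\omega}(n)$, and $J=\begin{pmatrix}1&0\\0&0\end{pmatrix}$. $\Omega_0$ is the set of $\omega\in\Omega$ such that $V_{12,\omega}(i)\neq0$ for all $i\in\mathbb Z$ and $V_{22,\omega}(i)\neq V_{22,\omega}(j)$ for all $i\neq j$. $\mathcal S_\omega|_{[1,N]}$ is the $2N\times2N$ block tridiagonal Hermitian matrix with diagonal blocks $V_\omega(1),\dots,V_\omega(N)$ and all off-diagonal blocks equal to $J$ (the restriction of $(\mathcal S_\omega\boldsymbol u)(n)=J\boldsymbol u(n+1)+J\boldsymbol u(n-1)+V_\omega(n)\boldsymbol u(n)$ to $[1,N]$ with Dirichlet boundary conditions). *)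

theory Defs
  imports "HOL-Probability.Probability" "Jordan_Normal_Form.Jordan_Normal_Form"
          "Jordan_Normal_Form.Schur_Decomposition" "Jordan_Normal_Form.Matrix_Kernel"
begin

definition ergodic_invertible :: "'a measure \<Rightarrow> ('a \<Rightarrow> 'a) \<Rightarrow> bool" where
  "ergodic_invertible \<nu> T \<longleftrightarrow>
     prob_space \<nu> \<and> space \<nu> = UNIV \<and> bij T \<and>
     T \<in> measurable \<nu> \<nu> \<and> inv_into UNIV T \<in> measurable \<nu> \<nu> \<and> distr \<nu> \<nu> T = \<nu> \<and>
     (\<forall>A \<in> sets \<nu>. T -` A = A \<longrightarrow> measure \<nu> A = 0 \<or> measure \<nu> A = 1)"

definition Tpow :: "('a \<Rightarrow> 'a) \<Rightarrow> int \<Rightarrow> 'a \<Rightarrow> 'a" where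
  "Tpow T n = (if n \<ge> 0 then T ^^ nat n else inv_into UNIV T ^^ nat (- n))"

definition Vpot :: "('a \<Rightarrow> complex mat) \<Rightarrow> ('a \<Rightarrow> 'a) \<Rightarrow> 'a \<Rightarrow> int \<Rightarrow> complex mat" where
  "Vpot f T \<omega> n = f (Tpow T n \<omega>)"

(* entries V_{12} and V_{22} (1-based in the paper, 0-based indices here) *)
definition V12 :: "('a \<Rightarrow> complex mat) \<Rightarrow> ('a \<Rightarrow> 'a) \<Rightarrow> 'a \<Rightarrow> int \<Rightarrow> complex" where
  "V12 f T \<omega> n = Vpot f T \<omega> n $$ (0, 1)"

definition V22 :: "('a \<Rightarrow> complex mat) \<Rightarrow> ('a \<Rightarrow> 'a) \<Rightarrow> 'a \<Rightarrow> int \<Rightarrow> complex" where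
  "V22 f T \<omega> n = Vpot f T \<omega> n $$ (1, 1)"

definition Omega0 :: "('a \<Rightarrow> complex mat) \<Rightarrow> ('a \<Rightarrow> 'a) \<Rightarrow> 'a set" where
  "Omega0 f T = {\<omega>. (\<forall>i. V12 f T \<omega> i \<noteq> 0) \<and>
                     (\<forall>i j. i \<noteq> j \<longrightarrow> V22 f T \<omega> i \<noteq> V22 f T \<omega> j)}"

(* The 2N x 2N block tridiagonal matrix S_omega restricted to [1,N] (Dirichlet b.c.):
   diagonal blocks V_omega(1..N), off-diagonal blocks J = [[1,0],[0,0]].
   Row/column index p (0-based) corresponds to site p div 2 + 1 and component p mod 2. *)
definition Smat :: "('a \<Rightarrow> complex mat) \<Rightarrow> ('a \<Rightarrow> 'a) \<Rightarrow> 'a \<Rightarrow> nat \<Rightarrow> complex mat" where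
  "Smat f T \<omega> N = mat (2 * N) (2 * N) (\<lambda>(p, q).
      let n = p div 2 + 1; r = p mod 2; m = q div 2 + 1; s = q mod 2 in
      if n = m then Vpot f T \<omega> (int n) $$ (r, s)
      else if (n = m + 1 \<or> m = n + 1) \<and> r = 0 \<and> s = 0 then 1 else 0)"

definition acomp :: "complex vec \<Rightarrow> nat \<Rightarrow> complex" where
  "acomp v j = v $ (2 * (j - 1))"

definition eig_mult :: "complex mat \<Rightarrow> complex \<Rightarrow> nat" where
  "eig_mult A z = kernel_dim (char_matrix A z)"

end

theory Submission
  imports Defs
begin

(* The eigenvalue equation is the recurrence
     a(j-1) + a(j+1) + V11(j) a(j) + V12(j) b(j) = z a(j),   V21(j) a(j) + V22(j) b(j) = z b(j)
   with a(0) = a(N+1) = 0. At a site with z /= V22(j), a(j) = 0 forces b(j) = 0 and then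
   a(j-1) = -a(j+1), so two consecutive zeros of a propagate through every such site; once a vanishes
   on [1,N], so does b, because V12 /= 0. Since the V22(j) are pairwise distinct, at most one site m has
   z = V22(m). Hence an eigenvector is determined by a(1) if m is not in [1,N-1], by a(N) if m is not
   in [2,N], and by the pair (a(1), a(N)) in any case, which bounds the dimension of the eigenspace by
   1 or 2. *)

lemma vec_set_in_line_if_coordinate_determines:
  fixes W :: "'a::field vec set"
  assumes W: "W \<subseteq> carrier_vec n" "0\<^sub>v n \<in> W"
    and closed: "\<And>u w c. u \<in> W \<Longrightarrow> w \<in> W \<Longrightarrow> u + c \<cdot>\<^sub>v w \<in> W"
    and i: "i < n" and determines: "\<forall>w\<in>W. w $ i = 0 \<longrightarrow> w = 0\<^sub>v n"
  shows "\<exists>q\<in>W. \<forall>w\<in>W. \<exists>c. w = c \<cdot>\<^sub>v q"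
proof (cases "W = {0\<^sub>v n}")
  case True
  then show ?thesis by (auto intro!: exI[of _ 1])
next
  case False
  then obtain q where q: "q \<in> W" "q \<noteq> 0\<^sub>v n" using W by blast
  then have qi: "q $ i \<noteq> 0" using determines by blast
  have "w = (w $ i / q $ i) \<cdot>\<^sub>v q" if w: "w \<in> W" for w
  proof -
    let ?r = "w + (- (w $ i / q $ i)) \<cdot>\<^sub>v q"
    have dims: "dim_vec w = n" "dim_vec q = n" using W w q by auto
    have "?r $ i = 0" using dims i qi by simp
    then have r0: "?r = 0\<^sub>v n" using determines closed[OF w q(1)] by blast
    show ?thesis
    proof (rule eq_vecI)
      fix k assume "k < dim_vec ((w $ i / q $ i) \<cdot>\<^sub>v q)"
      then have k: "k < n" using dims by simp
      have "?r $ k = 0" using r0 k by simp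
      then show "w $ k = ((w $ i / q $ i) \<cdot>\<^sub>v q) $ k" using dims k by (simp add: neg_eq_iff_add_eq_0)
    qed (simp add: dims)
  qed
  then show ?thesis using q by blast
qed

lemma mat_kernel_char_matrix_iff:
  fixes A :: "'a::field mat"
  assumes A: "A \<in> carrier_mat n n"
  shows "w \<in> mat_kernel (char_matrix A e) \<longleftrightarrow> w \<in> carrier_vec n \<and> A *\<^sub>v w = e \<cdot>\<^sub>v w"
proof -
  have "w \<in> mat_kernel (char_matrix A e) \<longleftrightarrow> w \<in> carrier_vec n \<and> char_matrix A e *\<^sub>v w = 0\<^sub>v n"
    using mat_kernel[OF char_matrix_closed[OF A]] by blast
  also have "\<dots> \<longleftrightarrow> w \<in> carrier_vec n \<and> A *\<^sub>v w = e \<cdot>\<^sub>v w"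
  proof (cases "w = 0\<^sub>v n")
    case True
    then show ?thesis using A by (auto intro!: eq_vecI simp: char_matrix_def)
  next
    case False
    then show ?thesis using eigenvector_char_matrix[OF A] A by (auto simp: eigenvector_def)
  qed
  finally show ?thesis .
qed

context kernel
begin

lemma dim_le_card_pair:
  assumes "p \<in> mat_kernel A" "q \<in> mat_kernel A"
    and spans: "\<forall>w\<in>mat_kernel A. \<exists>c d. w = c \<cdot>\<^sub>v p + d \<cdot>\<^sub>v q"
  shows "dim \<le> card {p, q}"
proof (rule Ker.gen_ge_dim)
  have sub: "{p, q} \<subseteq> mat_kernel A" using assms by auto
  interpret span: LinearCombinations.submodule class_ring "span {p, q}" VK
    using Ker.span_is_submodule[OF sub] by simp
  have "mat_kernel A \<subseteq> span {p, q}"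
  proof
    fix w assume "w \<in> mat_kernel A"
    then obtain c d where "w = c \<cdot>\<^sub>v p + d \<cdot>\<^sub>v q" using spans by blast
    moreover have "p \<in> span {p, q}" "q \<in> span {p, q}" using Ker.in_own_span[OF sub] by auto
    ultimately show "w \<in> span {p, q}"
      using span.m_closed span.smult_closed by (simp add: class_ring_simps)
  qed
  then show "span {p, q} = mat_kernel A" using Ker.span_is_subset2[OF sub] by auto
qed (use assms in auto)

lemma add_smult_closed:
  assumes "u \<in> mat_kernel A" "w \<in> mat_kernel A"
  shows "u + c \<cdot>\<^sub>v w \<in> mat_kernel A"
  using assms Ker.smult_closed Ker.add.m_closed by (simp add: class_ring_simps)

lemma zero_in_kernel: "0\<^sub>v nc \<in> mat_kernel A"
  using Ker.zero_closed by simp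

lemma dim_le_1_if_coordinate_determines:
  assumes "i < nc" "\<forall>w\<in>mat_kernel A. w $ i = 0 \<longrightarrow> w = 0\<^sub>v nc"
  shows "dim \<le> 1"
proof -
  obtain q where "q \<in> mat_kernel A" "\<forall>w\<in>mat_kernel A. \<exists>c. w = c \<cdot>\<^sub>v q"
    using vec_set_in_line_if_coordinate_determines[OF mat_kernel_carrier[OF A] zero_in_kernel
        add_smult_closed assms] by blast
  then have "dim \<le> card {q, q}"
    by (intro dim_le_card_pair) (auto intro: exI[of _ 0] simp: carrier_vecD mat_kernel_carrier[OF A])
  then show ?thesis by simp
qed

lemma dim_le_2_if_coordinates_determine:
  assumes i: "i < nc" and j: "j < nc"
    and determines: "\<forall>w\<in>mat_kernel A. w $ i = 0 \<longrightarrow> w $ j = 0 \<longrightarrow> w = 0\<^sub>v nc"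
  shows "dim \<le> 2"
proof (cases "\<exists>p\<in>mat_kernel A. p $ j \<noteq> 0")
  case False
  then have "dim \<le> 1" using dim_le_1_if_coordinate_determines[OF i] determines by blast
  then show ?thesis by simp
next
  case True
  then obtain p where p: "p \<in> mat_kernel A" "p $ j \<noteq> 0" by blast
  let ?H = "{w \<in> mat_kernel A. w $ j = 0}"
  have carrier: "\<And>w. w \<in> mat_kernel A \<Longrightarrow> dim_vec w = nc"
    using mat_kernel_carrier[OF A] by auto
  obtain q where q: "q \<in> ?H" and line: "\<forall>u\<in>?H. \<exists>d. u = d \<cdot>\<^sub>v q"
  proof -
    have "\<exists>q\<in>?H. \<forall>u\<in>?H. \<exists>d. u = d \<cdot>\<^sub>v q"
    proof (rule vec_set_in_line_if_coordinate_determines[OF _ _ _ i])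
      show "?H \<subseteq> carrier_vec nc" using mat_kernel_carrier[OF A] by auto
      show "0\<^sub>v nc \<in> ?H" using zero_in_kernel j by simp
      show "u + c \<cdot>\<^sub>v w \<in> ?H" if "u \<in> ?H" "w \<in> ?H" for u w c
        using that add_smult_closed carrier j by simp
    qed (use determines in auto)
    then show ?thesis using that by blast
  qed
  have "\<exists>c d. w = c \<cdot>\<^sub>v p + d \<cdot>\<^sub>v q" if w: "w \<in> mat_kernel A" for w
  proof -
    let ?c = "w $ j / p $ j"
    have "w + (- ?c) \<cdot>\<^sub>v p \<in> ?H"
      using add_smult_closed[OF w p(1)] carrier[OF w] carrier[OF p(1)] j p(2) by simp
    then obtain d where "w + (- ?c) \<cdot>\<^sub>v p = d \<cdot>\<^sub>v q" using line by blast
    moreover have "w = ?c \<cdot>\<^sub>v p + (w + (- ?c) \<cdot>\<^sub>v p)"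
      by (rule eq_vecI) (simp_all add: carrier[OF w] carrier[OF p(1)])
    ultimately show ?thesis by auto
  qed
  then have "dim \<le> card {p, q}" using p(1) q by (intro dim_le_card_pair) auto
  also have "\<dots> \<le> 2" by (simp add: card_insert_le_m1)
  finally show ?thesis .
qed

lemma coordinate_witnesses_if_dim_eq_2:
  assumes i: "i < nc" and j: "j < nc"
    and determines: "\<forall>w\<in>mat_kernel A. w $ i = 0 \<longrightarrow> w $ j = 0 \<longrightarrow> w = 0\<^sub>v nc"
    and dim: "dim = 2"
  shows "(\<exists>w\<in>mat_kernel A. w $ j \<noteq> 0) \<and> (\<exists>w\<in>mat_kernel A. w \<noteq> 0\<^sub>v nc \<and> w $ j = 0)"
proof (intro conjI; rule ccontr)
  assume "\<not> (\<exists>w\<in>mat_kernel A. w $ j \<noteq> 0)"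
  then have "dim \<le> 1" using dim_le_1_if_coordinate_determines[OF i] determines by blast
  then show False using dim by simp
next
  assume "\<not> (\<exists>w\<in>mat_kernel A. w \<noteq> 0\<^sub>v nc \<and> w $ j = 0)"
  then have "dim \<le> 1" using dim_le_1_if_coordinate_determines[OF j] by blast
  then show False using dim by simp
qed

lemma dim_pos_if_nonzero_in_kernel:
  assumes "v \<in> mat_kernel A" "v \<noteq> 0\<^sub>v nc"
  shows "0 < dim"
proof (rule ccontr)
  assume "\<not> 0 < dim"
  obtain B where B: "finite B" "basis B" using kernel_basis_exists[OF A] by blast
  then have "B = {}" using Ker.dim_basis \<open>\<not> 0 < dim\<close> by simp
  then have "mat_kernel A = span {}" using B(2) unfolding Ker.basis_def by simp
  also have "span {} = {0\<^sub>v nc}" unfolding Ker.span_def Ker.lincomb_def by auto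
  finally show False using assms by auto
qed

end

locale block_eigen_recurrence =
  fixes a b \<alpha> \<beta> \<delta> \<gamma> :: "nat \<Rightarrow> 'a::field" and N :: nat and z :: 'a
  assumes a_0: "a 0 = 0" and a_Suc_N: "a (Suc N) = 0"
    and eq_a: "\<And>j. j \<in> {1..N} \<Longrightarrow> a (j - 1) + a (j + 1) + \<alpha> j * a j + \<beta> j * b j = z * a j"
    and eq_b: "\<And>j. j \<in> {1..N} \<Longrightarrow> \<delta> j * a j + \<gamma> j * b j = z * b j"
    and \<beta>_nonzero: "\<And>j. j \<in> {1..N} \<Longrightarrow> \<beta> j \<noteq> 0"
begin

lemma neighbours_cancel_if_a_eq_0:
  assumes j: "j \<in> {1..N}" and "z \<noteq> \<gamma> j" "a j = 0"
  shows "a (j - 1) + a (j + 1) = 0"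
proof -
  have "(\<gamma> j - z) * b j = 0" using eq_b[OF j] assms by (simp add: algebra_simps)
  then have "b j = 0" using assms by simp
  then show ?thesis using eq_a[OF j] assms by simp
qed

lemma a_eq_0_from_left:
  assumes "l \<le> N" "\<forall>j\<in>{1..l}. z \<noteq> \<gamma> j" "a 1 = 0"
  shows "\<forall>i\<le>l + 1. a i = 0"
proof -
  have "a n = 0 \<and> a (n + 1) = 0" if "n \<le> l" for n
    using that
  proof (induction n)
    case (Suc n)
    then have "a n + a (n + 2) = 0"
      using neighbours_cancel_if_a_eq_0[of "n + 1"] assms by simp
    then show ?case using Suc by simp
  qed (use a_0 assms in simp)
  then show ?thesis by (metis Suc_eq_plus1 le_Suc_eq le_refl)
qed

lemma reflection:
  "block_eigen_recurrence (\<lambda>j. a (N + 1 - j)) (\<lambda>j. b (N + 1 - j)) (\<lambda>j. \<alpha> (N + 1 - j))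
     (\<lambda>j. \<beta> (N + 1 - j)) (\<lambda>j. \<delta> (N + 1 - j)) (\<lambda>j. \<gamma> (N + 1 - j)) N z"
proof
  fix j assume j: "j \<in> {1..N}"
  then have j': "N + 1 - j \<in> {1..N}" "N + 1 - (j - 1) = N + 1 - j + 1" "N + 1 - (j + 1) = N + 1 - j - 1"
    by auto
  show "a (N + 1 - (j - 1)) + a (N + 1 - (j + 1)) + \<alpha> (N + 1 - j) * a (N + 1 - j)
      + \<beta> (N + 1 - j) * b (N + 1 - j) = z * a (N + 1 - j)"
    using eq_a[OF j'(1)] unfolding j'(2,3) by (simp add: add.commute)
  show "\<delta> (N + 1 - j) * a (N + 1 - j) + \<gamma> (N + 1 - j) * b (N + 1 - j) = z * b (N + 1 - j)"
    using eq_b[OF j'(1)] .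
  show "\<beta> (N + 1 - j) \<noteq> 0" using \<beta>_nonzero[OF j'(1)] .
qed (simp_all add: a_0 a_Suc_N)

lemma a_eq_0_from_right:
  assumes "1 \<le> k" "\<forall>j\<in>{k..N}. z \<noteq> \<gamma> j" "a N = 0"
  shows "\<forall>i\<in>{k - 1..N + 1}. a i = 0"
proof -
  interpret reflected: block_eigen_recurrence "\<lambda>j. a (N + 1 - j)" "\<lambda>j. b (N + 1 - j)"
    "\<lambda>j. \<alpha> (N + 1 - j)" "\<lambda>j. \<beta> (N + 1 - j)" "\<lambda>j. \<delta> (N + 1 - j)" "\<lambda>j. \<gamma> (N + 1 - j)" N z
    by (rule reflection)
  have "z \<noteq> \<gamma> (N + 1 - j)" if "j \<in> {1..N + 1 - k}" for j
  proof -
    have "N + 1 - j \<in> {k..N}" using that assms(1) by auto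
    then show ?thesis using assms(2) by blast
  qed
  then have reflected_zeros: "\<forall>i\<le>N + 1 - k + 1. a (N + 1 - i) = 0"
    using assms(1,3) by (intro reflected.a_eq_0_from_left) simp_all
  show ?thesis
  proof
    fix i assume "i \<in> {k - 1..N + 1}"
    then have "N + 1 - i \<le> N + 1 - k + 1" "N + 1 - (N + 1 - i) = i" using assms(1) by auto
    then show "a i = 0" using reflected_zeros by metis
  qed
qed

lemma b_eq_0_if_a_eq_0:
  assumes "\<forall>i\<in>{1..N}. a i = 0"
  shows "\<forall>j\<in>{1..N}. b j = 0"
proof
  fix j assume j: "j \<in> {1..N}"
  have "a (j - 1) = 0" using assms j a_0 by (cases "j = 1") (auto intro!: assms[rule_format])
  moreover have "a (j + 1) = 0" using assms j a_Suc_N by (cases "j = N") auto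
  ultimately have "\<beta> j * b j = 0" using eq_a[OF j] assms j by simp
  then show "b j = 0" using \<beta>_nonzero[OF j] by simp
qed

lemma vanishes_if_a_1_eq_0:
  assumes "\<forall>j\<in>{1..N - 1}. z \<noteq> \<gamma> j" "a 1 = 0"
  shows "\<forall>j\<in>{1..N}. a j = 0 \<and> b j = 0"
proof -
  have "\<forall>i\<le>N - 1 + 1. a i = 0" using assms by (intro a_eq_0_from_left) auto
  then have "\<forall>i\<in>{1..N}. a i = 0" by auto
  then show ?thesis using b_eq_0_if_a_eq_0 by blast
qed

lemma vanishes_if_a_N_eq_0:
  assumes "\<forall>j\<in>{2..N}. z \<noteq> \<gamma> j" "a N = 0"
  shows "\<forall>j\<in>{1..N}. a j = 0 \<and> b j = 0"
proof -
  have "\<forall>i\<in>{2 - 1..N + 1}. a i = 0" using assms by (intro a_eq_0_from_right) auto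
  then have "\<forall>i\<in>{1..N}. a i = 0" by auto
  then show ?thesis using b_eq_0_if_a_eq_0 by blast
qed

lemma vanishes_if_a_1_a_N_eq_0:
  assumes m: "m \<in> {1..N}" and "\<forall>j\<in>{1..N} - {m}. z \<noteq> \<gamma> j" "a 1 = 0" "a N = 0"
  shows "\<forall>j\<in>{1..N}. a j = 0 \<and> b j = 0"
proof -
  have "{1..m - 1} \<subseteq> {1..N} - {m}" "{m + 1..N} \<subseteq> {1..N} - {m}" using m by auto
  then have "\<forall>j\<in>{1..m - 1}. z \<noteq> \<gamma> j" "\<forall>j\<in>{m + 1..N}. z \<noteq> \<gamma> j" using assms(2) by blast+
  then have zeros: "\<forall>i\<le>m. a i = 0" "\<forall>i\<in>{m..N + 1}. a i = 0"
    using a_eq_0_from_left[of "m - 1"] a_eq_0_from_right[of "m + 1"] assms m by auto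
  have "\<forall>i\<in>{1..N}. a i = 0"
  proof
    fix i assume "i \<in> {1..N}"
    then show "a i = 0" using zeros m by (cases "i \<le> m") auto
  qed
  then show ?thesis using b_eq_0_if_a_eq_0 by blast
qed

end

lemma Smat_carrier: "Smat f T \<omega> N \<in> carrier_mat (2 * N) (2 * N)"
  by (simp add: Smat_def)

lemma Smat_entry_even_row:
  assumes "k < N" "q < 2 * N"
  shows "Smat f T \<omega> N $$ (2 * k, q) =
    (if q = 2 * k then Vpot f T \<omega> (int (k + 1)) $$ (0, 0) else 0)
    + (if q = 2 * k + 1 then Vpot f T \<omega> (int (k + 1)) $$ (0, 1) else 0)
    + (if q + 2 = 2 * k then 1 else 0) + (if q = 2 * k + 2 then 1 else 0)"
  using assms by (auto simp: Smat_def Let_def) presburger+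

lemma Smat_entry_odd_row:
  assumes "k < N" "q < 2 * N"
  shows "Smat f T \<omega> N $$ (2 * k + 1, q) =
    (if q = 2 * k then Vpot f T \<omega> (int (k + 1)) $$ (1, 0) else 0)
    + (if q = 2 * k + 1 then Vpot f T \<omega> (int (k + 1)) $$ (1, 1) else 0)"
  using assms by (auto simp: Smat_def Let_def)

lemma Smat_mult_vec_index:
  assumes "w \<in> carrier_vec (2 * N)" "p < 2 * N"
  shows "(Smat f T \<omega> N *\<^sub>v w) $ p = (\<Sum>q<2 * N. Smat f T \<omega> N $$ (p, q) * w $ q)"
  using assms by (simp add: Smat_def scalar_prod_def lessThan_atLeast0)

lemma Smat_mult_vec_even_row:
  assumes w: "w \<in> carrier_vec (2 * N)" and k: "k < N"
  shows "(Smat f T \<omega> N *\<^sub>v w) $ (2 * k) =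
    Vpot f T \<omega> (int (k + 1)) $$ (0, 0) * w $ (2 * k) + Vpot f T \<omega> (int (k + 1)) $$ (0, 1) * w $ (2 * k + 1)
    + (if 1 \<le> k then w $ (2 * k - 2) else 0) + (if k + 1 < N then w $ (2 * k + 2) else 0)"
    (is "_ = ?rhs")
proof -
  have "2 * k < 2 * N" using k by simp
  have "(Smat f T \<omega> N *\<^sub>v w) $ (2 * k) = (\<Sum>q<2 * N.
    (if q = 2 * k then Vpot f T \<omega> (int (k + 1)) $$ (0, 0) * w $ q else 0)
    + (if q = 2 * k + 1 then Vpot f T \<omega> (int (k + 1)) $$ (0, 1) * w $ q else 0)
    + (if q = 2 * k - 2 then if 1 \<le> k then w $ q else 0 else 0) + (if q = 2 * k + 2 then w $ q else 0))"
    unfolding Smat_mult_vec_index[OF w \<open>2 * k < 2 * N\<close>]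
    by (intro sum.cong) (auto simp: Smat_entry_even_row k)
  also have "\<dots> = ?rhs"
    using k by (simp add: sum.distrib sum.delta less_imp_diff_less)
  finally show ?thesis .
qed

lemma Smat_mult_vec_odd_row:
  assumes w: "w \<in> carrier_vec (2 * N)" and k: "k < N"
  shows "(Smat f T \<omega> N *\<^sub>v w) $ (2 * k + 1) =
    Vpot f T \<omega> (int (k + 1)) $$ (1, 0) * w $ (2 * k) + Vpot f T \<omega> (int (k + 1)) $$ (1, 1) * w $ (2 * k + 1)"
proof -
  have "2 * k + 1 < 2 * N" using k by simp
  have "(Smat f T \<omega> N *\<^sub>v w) $ (2 * k + 1) = (\<Sum>q<2 * N.
    (if q = 2 * k then Vpot f T \<omega> (int (k + 1)) $$ (1, 0) * w $ q else 0)
    + (if q = 2 * k + 1 then Vpot f T \<omega> (int (k + 1)) $$ (1, 1) * w $ q else 0))"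
    unfolding Smat_mult_vec_index[OF w \<open>2 * k + 1 < 2 * N\<close>]
    by (intro sum.cong) (auto simp: Smat_entry_odd_row[OF k, simplified])
  also have "\<dots> = Vpot f T \<omega> (int (k + 1)) $$ (1, 0) * w $ (2 * k)
      + Vpot f T \<omega> (int (k + 1)) $$ (1, 1) * w $ (2 * k + 1)"
    using k by (simp add: sum.distrib sum.delta)
  finally show ?thesis .
qed

definition acomp_dirichlet :: "nat \<Rightarrow> complex vec \<Rightarrow> nat \<Rightarrow> complex" where
  "acomp_dirichlet N w j = (if j \<in> {1..N} then acomp w j else 0)"

definition bcomp :: "complex vec \<Rightarrow> nat \<Rightarrow> complex" where
  "bcomp w j = w $ (2 * (j - 1) + 1)"

lemma Smat_eigen_recurrence:
  assumes V12: "\<forall>j\<in>{1..N}. V12 f T \<omega> (int j) \<noteq> 0"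
    and w: "w \<in> carrier_vec (2 * N)" and eigen: "Smat f T \<omega> N *\<^sub>v w = z \<cdot>\<^sub>v w"
  shows "block_eigen_recurrence (acomp_dirichlet N w) (bcomp w)
    (\<lambda>j. Vpot f T \<omega> (int j) $$ (0, 0)) (\<lambda>j. V12 f T \<omega> (int j))
    (\<lambda>j. Vpot f T \<omega> (int j) $$ (1, 0)) (\<lambda>j. V22 f T \<omega> (int j)) N z"
proof
  fix j assume j: "j \<in> {1..N}"
  then obtain k where k: "j = k + 1" "k < N" by (cases j) auto
  have "acomp_dirichlet N w (j - 1) = (if 1 \<le> k then w $ (2 * k - 2) else 0)"
    "acomp_dirichlet N w (j + 1) = (if k + 1 < N then w $ (2 * k + 2) else 0)"
    "acomp_dirichlet N w j = w $ (2 * k)" "bcomp w j = w $ (2 * k + 1)"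
    using k by (auto simp: acomp_dirichlet_def acomp_def bcomp_def diff_mult_distrib2)
  moreover have "(Smat f T \<omega> N *\<^sub>v w) $ (2 * k) = z * w $ (2 * k)"
    "(Smat f T \<omega> N *\<^sub>v w) $ (2 * k + 1) = z * w $ (2 * k + 1)"
    using eigen w k by (simp_all add: arg_cong[OF eigen])
  ultimately show "acomp_dirichlet N w (j - 1) + acomp_dirichlet N w (j + 1)
      + Vpot f T \<omega> (int j) $$ (0, 0) * acomp_dirichlet N w j + V12 f T \<omega> (int j) * bcomp w j
      = z * acomp_dirichlet N w j"
    "Vpot f T \<omega> (int j) $$ (1, 0) * acomp_dirichlet N w j + V22 f T \<omega> (int j) * bcomp w j
      = z * bcomp w j"
    using Smat_mult_vec_even_row[OF w k(2), where f = f and T = T and \<omega> = \<omega>]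
      Smat_mult_vec_odd_row[OF w k(2), where f = f and T = T and \<omega> = \<omega>] k
    by (simp_all add: V12_def V22_def algebra_simps)
  show "V12 f T \<omega> (int j) \<noteq> 0" using V12 j by blast
qed (simp_all add: acomp_dirichlet_def)

lemma vec_eq_0_if_acomp_bcomp_eq_0:
  assumes w: "w \<in> carrier_vec (2 * N)" and zero: "\<forall>j\<in>{1..N}. acomp w j = 0 \<and> bcomp w j = 0"
  shows "w = 0\<^sub>v (2 * N)"
proof (rule eq_vecI)
  fix p assume p: "p < dim_vec (0\<^sub>v (2 * N))"
  define j where "j = p div 2 + 1"
  have "j \<in> {1..N}" "p = 2 * (j - 1) \<or> p = 2 * (j - 1) + 1" using p by (auto simp: j_def)
  then have "w $ p = 0" using zero unfolding acomp_def bcomp_def by auto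
  then show "w $ p = 0\<^sub>v (2 * N) $ p" using p by simp
qed (use w in simp)

locale Smat_eigenspace =
  fixes f :: "'a \<Rightarrow> complex mat" and T :: "'a \<Rightarrow> 'a" and \<omega> :: 'a and N :: nat and z :: complex
  assumes Omega0: "\<omega> \<in> Omega0 f T" and N_pos: "1 \<le> N"
begin

abbreviation S :: "complex mat" where "S \<equiv> Smat f T \<omega> N"

sublocale kernel "2 * N" "2 * N" "char_matrix S z"
  by unfold_locales (simp add: Smat_carrier)

lemma V22_eq_iff: "V22 f T \<omega> (int i) = V22 f T \<omega> (int j) \<longleftrightarrow> i = j"
proof -
  have "V22 f T \<omega> (int i) = V22 f T \<omega> (int j) \<Longrightarrow> int i = int j"
    using Omega0 unfolding Omega0_def by blast
  then show ?thesis by auto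
qed

lemma in_kernel_iff: "w \<in> mat_kernel (char_matrix S z) \<longleftrightarrow> w \<in> carrier_vec (2 * N) \<and> S *\<^sub>v w = z \<cdot>\<^sub>v w"
  by (rule mat_kernel_char_matrix_iff[OF Smat_carrier])

lemma eigenvector_iff: "eigenvector S w z \<longleftrightarrow> w \<in> mat_kernel (char_matrix S z) \<and> w \<noteq> 0\<^sub>v (2 * N)"
  using Smat_carrier[of f T \<omega> N] unfolding in_kernel_iff eigenvector_def by auto

lemma eigen_recurrence:
  assumes "w \<in> mat_kernel (char_matrix S z)"
  shows "block_eigen_recurrence (acomp_dirichlet N w) (bcomp w)
    (\<lambda>j. Vpot f T \<omega> (int j) $$ (0, 0)) (\<lambda>j. V12 f T \<omega> (int j))
    (\<lambda>j. Vpot f T \<omega> (int j) $$ (1, 0)) (\<lambda>j. V22 f T \<omega> (int j)) N z"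
proof (rule Smat_eigen_recurrence)
  show "\<forall>j\<in>{1..N}. V12 f T \<omega> (int j) \<noteq> 0" using Omega0 unfolding Omega0_def by blast
qed (use assms in_kernel_iff in blast)+

lemma kernel_vec_eq_0_if_components_eq_0:
  assumes "w \<in> mat_kernel (char_matrix S z)"
    and "\<forall>j\<in>{1..N}. acomp_dirichlet N w j = 0 \<and> bcomp w j = 0"
  shows "w = 0\<^sub>v (2 * N)"
proof (rule vec_eq_0_if_acomp_bcomp_eq_0)
  show "w \<in> carrier_vec (2 * N)" using assms(1) in_kernel_iff by blast
  show "\<forall>j\<in>{1..N}. acomp w j = 0 \<and> bcomp w j = 0" using assms(2) by (simp add: acomp_dirichlet_def)
qed

lemma kernel_vec_eq_0_if_acomp_1_eq_0:
  assumes "\<forall>j\<in>{1..N - 1}. z \<noteq> V22 f T \<omega> (int j)" "w \<in> mat_kernel (char_matrix S z)" "acomp w 1 = 0"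
  shows "w = 0\<^sub>v (2 * N)"
proof (rule kernel_vec_eq_0_if_components_eq_0[OF assms(2)])
  show "\<forall>j\<in>{1..N}. acomp_dirichlet N w j = 0 \<and> bcomp w j = 0"
    by (rule block_eigen_recurrence.vanishes_if_a_1_eq_0[OF eigen_recurrence[OF assms(2)]])
      (use assms N_pos in \<open>simp_all add: acomp_dirichlet_def\<close>)
qed

lemma kernel_vec_eq_0_if_acomp_N_eq_0:
  assumes "\<forall>j\<in>{2..N}. z \<noteq> V22 f T \<omega> (int j)" "w \<in> mat_kernel (char_matrix S z)" "acomp w N = 0"
  shows "w = 0\<^sub>v (2 * N)"
proof (rule kernel_vec_eq_0_if_components_eq_0[OF assms(2)])
  show "\<forall>j\<in>{1..N}. acomp_dirichlet N w j = 0 \<and> bcomp w j = 0"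
    by (rule block_eigen_recurrence.vanishes_if_a_N_eq_0[OF eigen_recurrence[OF assms(2)]])
      (use assms N_pos in \<open>simp_all add: acomp_dirichlet_def\<close>)
qed

lemma kernel_vec_eq_0_if_acomp_1_N_eq_0:
  assumes "m \<in> {1..N}" "z = V22 f T \<omega> (int m)" "w \<in> mat_kernel (char_matrix S z)"
    "acomp w 1 = 0" "acomp w N = 0"
  shows "w = 0\<^sub>v (2 * N)"
proof -
  have "\<forall>j\<in>{1..N} - {m}. z \<noteq> V22 f T \<omega> (int j)" using assms(2) V22_eq_iff by auto
  then show ?thesis
    by (intro kernel_vec_eq_0_if_components_eq_0[OF assms(3)]
        block_eigen_recurrence.vanishes_if_a_1_a_N_eq_0[OF eigen_recurrence[OF assms(3)] assms(1)])
      (use assms N_pos in \<open>simp_all add: acomp_dirichlet_def\<close>)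
qed

lemma acomp_1_neq_0:
  assumes "\<forall>j\<in>{1..N - 1}. z \<noteq> V22 f T \<omega> (int j)" "eigenvector S v z"
  shows "acomp v 1 \<noteq> 0"
  using kernel_vec_eq_0_if_acomp_1_eq_0[OF assms(1)] assms(2) unfolding eigenvector_iff by blast

lemma acomp_N_neq_0:
  assumes "\<forall>j\<in>{2..N}. z \<noteq> V22 f T \<omega> (int j)" "eigenvector S v z"
  shows "acomp v N \<noteq> 0"
  using kernel_vec_eq_0_if_acomp_N_eq_0[OF assms(1)] assms(2) unfolding eigenvector_iff by blast

lemma eig_mult_eq_1:
  assumes nonresonant: "\<forall>j\<in>{2..N - 1}. z \<noteq> V22 f T \<omega> (int j)" and v: "eigenvector S v z"
  shows "eig_mult S z = 1"
proof -
  have "dim \<le> 1"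
  proof (cases "z = V22 f T \<omega> 1")
    case True
    then have "\<forall>j\<in>{2..N}. z \<noteq> V22 f T \<omega> (int j)" using V22_eq_iff[of 1] by auto
    then show ?thesis
      using kernel_vec_eq_0_if_acomp_N_eq_0 N_pos
      by (intro dim_le_1_if_coordinate_determines[of "2 * (N - 1)"]) (auto simp: acomp_def)
  next
    case False
    have "z \<noteq> V22 f T \<omega> (int j)" if "j \<in> {1..N - 1}" for j
      using False nonresonant that by (cases "j = 1") auto
    then show ?thesis
      using kernel_vec_eq_0_if_acomp_1_eq_0 N_pos
      by (intro dim_le_1_if_coordinate_determines[of 0]) (auto simp: acomp_def)
  qed
  moreover have "0 < dim" using v dim_pos_if_nonzero_in_kernel unfolding eigenvector_iff by blast
  ultimately show ?thesis unfolding eig_mult_def by simp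
qed

lemma eig_mult_le_2:
  assumes "m \<in> {1..N}" "z = V22 f T \<omega> (int m)"
  shows "eig_mult S z \<le> 2"
  using kernel_vec_eq_0_if_acomp_1_N_eq_0[OF assms] N_pos
  by (auto simp: eig_mult_def acomp_def intro!: dim_le_2_if_coordinates_determine[of 0 "2 * (N - 1)"])

lemma eigenvectors_if_eig_mult_eq_2:
  assumes "m \<in> {1..N}" "z = V22 f T \<omega> (int m)" "eig_mult S z = 2"
  shows "(\<exists>w. eigenvector S w z \<and> acomp w N \<noteq> 0) \<and> (\<exists>w. eigenvector S w z \<and> acomp w N = 0)"
proof -
  have "(\<exists>w\<in>mat_kernel (char_matrix S z). w $ (2 * (N - 1)) \<noteq> 0)
    \<and> (\<exists>w\<in>mat_kernel (char_matrix S z). w \<noteq> 0\<^sub>v (2 * N) \<and> w $ (2 * (N - 1)) = 0)"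
    using kernel_vec_eq_0_if_acomp_1_N_eq_0[OF assms(1,2)] N_pos assms(3)
    by (intro coordinate_witnesses_if_dim_eq_2[of 0]) (auto simp: eig_mult_def acomp_def)
  moreover have "w \<noteq> 0\<^sub>v (2 * N)" if "w $ (2 * (N - 1)) \<noteq> 0" for w :: "complex vec"
    using that N_pos by auto
  ultimately show ?thesis unfolding eigenvector_iff acomp_def by blast
qed

end

theorem lemma5p7:
  fixes \<nu> :: "'a measure" and T :: "'a \<Rightarrow> 'a" and f :: "'a \<Rightarrow> complex mat"
    and \<omega> :: 'a and N :: nat and v :: "complex vec" and z :: complex
  assumes erg: "ergodic_invertible \<nu> T"
    and f_mat: "\<And>x. f x \<in> carrier_mat 2 2"
    and f_sa: "\<And>x. mat_adjoint (f x) = f x"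
    and f_meas: "\<And>i j. i < 2 \<Longrightarrow> j < 2 \<Longrightarrow> (\<lambda>x. f x $$ (i, j)) \<in> borel_measurable \<nu>"
    and f_bdd: "\<exists>C. \<forall>x i j. i < 2 \<longrightarrow> j < 2 \<longrightarrow> cmod (f x $$ (i, j)) \<le> C"
    and om: "\<omega> \<in> Omega0 f T"
    and N: "N \<ge> 2"
    and ev: "eigenvector (Smat f T \<omega> N) v z"
  shows "((\<forall>j \<in> {1..N}. z \<noteq> V22 f T \<omega> (int j)) \<longrightarrow> acomp v 1 * acomp v N \<noteq> 0)
       \<and> (z = V22 f T \<omega> 1 \<longrightarrow> acomp v N \<noteq> 0)
       \<and> (z = V22 f T \<omega> (int N) \<longrightarrow> acomp v 1 \<noteq> 0)
       \<and> ((\<forall>j \<in> {2..N-1}. z \<noteq> V22 f T \<omega> (int j)) \<longrightarrow> eig_mult (Smat f T \<omega> N) z = 1)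
       \<and> (\<forall>m \<in> {2..N-1}. z = V22 f T \<omega> (int m) \<longrightarrow>
            eig_mult (Smat f T \<omega> N) z \<le> 2 \<and>
            (eig_mult (Smat f T \<omega> N) z = 2 \<longrightarrow>
               (\<exists>w. eigenvector (Smat f T \<omega> N) w z \<and> acomp w N \<noteq> 0) \<and>
               (\<exists>w. eigenvector (Smat f T \<omega> N) w z \<and> acomp w N = 0)))"
proof -
  \<comment> \<open>Only the two defining properties of Omega0 are used.\<close>
  interpret Smat_eigenspace f T \<omega> N z using om N by unfold_locales auto
  have nonresonant_right: "\<forall>j\<in>{2..N}. z \<noteq> V22 f T \<omega> (int j)" if "z = V22 f T \<omega> 1"
    using that V22_eq_iff[of 1] by auto
  have nonresonant_left: "\<forall>j\<in>{1..N - 1}. z \<noteq> V22 f T \<omega> (int j)" if "z = V22 f T \<omega> (int N)"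
    using that V22_eq_iff[of N] by auto
  show ?thesis
  proof (intro conjI impI ballI)
    assume "\<forall>j\<in>{1..N}. z \<noteq> V22 f T \<omega> (int j)"
    then have "\<forall>j\<in>{1..N - 1}. z \<noteq> V22 f T \<omega> (int j)" "\<forall>j\<in>{2..N}. z \<noteq> V22 f T \<omega> (int j)"
      by auto
    then show "acomp v 1 * acomp v N \<noteq> 0"
      using acomp_1_neq_0[OF _ ev] acomp_N_neq_0[OF _ ev] by simp
  next
    show "acomp v N \<noteq> 0" if "z = V22 f T \<omega> 1"
      using acomp_N_neq_0[OF nonresonant_right[OF that] ev] .
    show "acomp v 1 \<noteq> 0" if "z = V22 f T \<omega> (int N)"
      using acomp_1_neq_0[OF nonresonant_left[OF that] ev] .
    show "eig_mult S z = 1" if "\<forall>j\<in>{2..N - 1}. z \<noteq> V22 f T \<omega> (int j)"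
      using eig_mult_eq_1[OF that ev] .
  next
    fix m assume "m \<in> {2..N - 1}" "z = V22 f T \<omega> (int m)"
    then have "m \<in> {1..N}" by auto
    then show "eig_mult S z \<le> 2" "eig_mult S z = 2 \<Longrightarrow> \<exists>w. eigenvector S w z \<and> acomp w N \<noteq> 0"
      "eig_mult S z = 2 \<Longrightarrow> \<exists>w. eigenvector S w z \<and> acomp w N = 0"
      using eig_mult_le_2 eigenvectors_if_eig_mult_eq_2 \<open>z = V22 f T \<omega> (int m)\<close> by blast+
  qed
qed

end
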